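(* Let $\Lambda$ be a finite set of pixels, $S=\{0,1\}^{\Lambda}$, and let $S_I\subseteq S$ be a nonempty set (the images with label $1$), with $N_I=|S_I|$. Let $F:S\to\{0,1\}$ be its indicator function and $f=F/\sqrt{N_I}$ its normalization. Partition $\Lambda=A\sqcup B$, identify $s\in S$ with $(s_A,s_B)\in\{0,1\}^A\times\{0,1\}^B$, let $\partial\subseteq A$ be a set of boundary pixels with $|\partial|=L_{AB}$, and let $R\subseteq A$ be a region adjacent to the boundary with $|R|=r\,L_{AB}$. Assume: (1) if $s,s'\in S_I$ satisfy $s_B=s'_B$, then $s|_{\partial}=s'|_{\partial}$; (2) for $s_A,s'_A\in\{0,1\}^A$ each of which is extendable (i.e. there is some $s_B$ with $(s_A,s_B)\in S_I$), the number $N_{s_A s'_A}=\#\{s_B\in\{0,1\}^B:(s_A,s_B)\in S_I\text{ and }(s'_A,s_B)\in S_I\}$ depends only on the restrictions $s_A|_R$ and $s'_A|_R$. Then the bipartite entanglement entropy of $f$ satisfies $S_{AB}\le r\,L_{AB}\log 2$.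
   Context: For $f:S\to\mathbb{C}$ with $\sum_s|f(s)|^2=1$, its density matrix is $\rho_{s,s'}=\overline{f(s)}\,f(s')$, and the reduced density matrix on $A$ is $\rho^A_{s_A,s'_A}=\sum_{s_B\in\{0,1\}^B}\rho_{(s_A,s_B),(s'_A,s_B)}$. The bipartite entanglement entropy is $S_{AB}=S_A=-\mathrm{tr}(\rho^A\log\rho^A)$ (computed from the eigenvalues of $\rho^A$, with $0\log 0=0$). *)

theory Defs
  imports "HOL-Analysis.Analysis" "HOL-Computational_Algebra.Polynomial"
begin

text \<open>Configurations s of S = {0,1}^Lambda, Lambda = A + B, are identified with pairs
  (s_A, s_B) where s_A :: 'a => bool (pixels of A) and s_B :: 'b => bool (pixels of B).\<close>

definition reduced_density ::
  "(('x::finite) \<times> ('y::finite) \<Rightarrow> complex) \<Rightarrow> complex ^ 'x ^ 'x" where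
  "reduced_density f = (\<chi> x x'. \<Sum>y\<in>UNIV. cnj (f (x, y)) * f (x', y))"

definition charpoly :: "'c::comm_ring_1 ^ 'n ^ 'n \<Rightarrow> 'c poly" where
  "charpoly M = det (\<chi> i j. (if i = j then [:0, 1:] else 0) - [:M $ i $ j:])"

definition eigenvalue_list :: "complex ^ 'n ^ 'n \<Rightarrow> complex list" where
  "eigenvalue_list M = (SOME es. charpoly M = (\<Prod>e\<leftarrow>es. [:- e, 1:]))"

text \<open>von Neumann entropy -tr(M log M) = - sum over eigenvalues of lambda log lambda
  (natural log; ln 0 = 0 in Isabelle, so 0 log 0 = 0).\<close>
definition vn_entropy :: "complex ^ 'n ^ 'n \<Rightarrow> real" where
  "vn_entropy M = - (\<Sum>e\<leftarrow>eigenvalue_list M. Re e * ln (Re e))"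

end

theory Submission
  imports Defs "HOL-Computational_Algebra.Fundamental_Theorem_Algebra"
begin

text \<open>The reduced density matrix \<rho> of the normalized indicator of \<open>S\<^sub>I\<close> has entries
  \<open>N\<^bsub>s\<^sub>A s'\<^sub>A\<^esub> / N\<^sub>I\<close>. It is positive semidefinite with unit trace, so its eigenvalues form a
  probability vector and its entropy is at most the logarithm of the number of nonzero
  eigenvalues. Subtracting repeated rows from \<open>X I - \<rho>\<close> shows that this number is at most the
  number of distinct nonzero rows of \<rho>. Nonzero rows belong to extendable \<open>s\<^sub>A\<close>, and by
  hypothesis (2) such a row depends only on \<open>s\<^sub>A|\<^sub>R\<close>, so there are at most \<open>2\<^bsup>|R|\<^esup>\<close> of them.\<close>

lemma prod_linear_factors_Cons:
  "(\<Prod>e\<leftarrow>a # es. [:- e, 1:]) = [:- a, 1:] * (\<Prod>e\<leftarrow>es. [:- e, 1:] :: 'a::comm_ring_1 poly)"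
  by (simp only: list.map prod_list.Cons)

lemma prod_linear_factors_nonzero [simp]:
  "(\<Prod>e\<leftarrow>es. [:- e, 1:] :: 'a::idom poly) \<noteq> 0"
  by (auto simp: prod_list_zero_iff)

lemma degree_prod_linear_factors [simp]:
  "degree (\<Prod>e\<leftarrow>es. [:- e, 1:] :: 'a::idom poly) = length es"
  by (induction es) (simp_all only: prod_linear_factors_Cons, simp_all add: degree_mult_eq del: mult_pCons_left)

lemma lead_coeff_prod_linear_factors [simp]:
  "lead_coeff (\<Prod>e\<leftarrow>es. [:- e, 1:] :: 'a::idom poly) = 1"
  by (induction es) (simp_all only: prod_linear_factors_Cons lead_coeff_mult, auto)

lemma coeff_prod_linear_factors_subleading:
  fixes es :: "'a::idom list"
  assumes "es \<noteq> []"
  shows "coeff (\<Prod>e\<leftarrow>es. [:- e, 1:]) (length es - 1) = - sum_list es"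
  using assms
proof (induction es)
  case Nil
  then show ?case by simp
next
  case (Cons a es)
  define q where "q = (\<Prod>e\<leftarrow>es. [:- e, 1:])"
  have "(\<Prod>e\<leftarrow>a # es. [:- e, 1:]) = smult (- a) q + pCons 0 q"
    by (simp add: q_def mult_pCons_left)
  moreover have "coeff q (length es) = 1"
    using lead_coeff_prod_linear_factors[of es] by (simp add: q_def)
  moreover have "coeff q (length es - 1) = - sum_list es" if "es \<noteq> []"
    using Cons.IH that by (simp add: q_def)
  ultimately show ?case
    by (cases es) (auto simp: q_def)
qed

lemma proots_prod_linear_factors:
  "proots (\<Prod>e\<leftarrow>es. [:- e, 1:] :: 'a::idom poly) = mset es"
proof (induction es)
  case (Cons a es)
  have "proots [:- a, 1:] = {#a#}"
    using proots_linear_factor[of "- a"] by simp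
  then show ?case
    using Cons.IH by (simp only: prod_linear_factors_Cons) (simp add: proots_mult del: mult_pCons_left)
qed simp

lemma complex_monic_poly_splits:
  fixes p :: "complex poly"
  assumes "lead_coeff p = 1"
  obtains es where "p = (\<Prod>e\<leftarrow>es. [:- e, 1:])"
proof -
  obtain es where es: "mset es = proots p"
    using ex_mset by blast
  have "p = smult (lead_coeff p) (\<Prod>x\<in>#proots p. [:- x, 1:])"
    by (rule complex_poly_decompose_multiset[symmetric])
  also have "\<dots> = (\<Prod>e\<leftarrow>es. [:- e, 1:])"
    using assms by (simp add: es[symmetric] prod_mset_prod_list[symmetric])
  finally show ?thesis by (rule that)
qed

lemma poly_charpoly: "poly (charpoly A) e = det (mat e - A)"
proof -
  have "poly ((if b then [:0, 1:] else 0) - [:a:]) e = (if b then e else 0) - a" for b a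
    by simp
  then show ?thesis
    unfolding charpoly_def det_def by (simp add: poly_sum poly_prod mat_def)
qed

lemma card_fixpoints_le_permutation:
  assumes p: "p permutes (UNIV :: 'n::finite set)" and "p \<noteq> id"
  shows "card {i. p i = i} + 2 \<le> CARD('n)"
proof -
  obtain i where i: "p i \<noteq> i"
    using \<open>p \<noteq> id\<close> by (metis eq_id_iff)
  then have "p (p i) \<noteq> p i"
    using permutes_inj[OF p] by (metis injD)
  with i have "{i, p i} \<subseteq> - {j. p j = j}" and "card {i, p i} = 2"
    by auto
  then have "2 \<le> card (- {j. p j = j})"
    by (metis card_mono finite)
  also have "\<dots> = CARD('n) - card {j. p j = j}"
    by (simp add: Compl_eq_Diff_UNIV card_Diff_subset)
  finally show ?thesis
    using card_mono[of UNIV "{j. p j = j}"] by auto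
qed

lemma coeff_charpoly_minus_diagonal:
  fixes A :: "'a::comm_ring_1^'n^'n"
  assumes k: "CARD('n) \<le> Suc k"
  shows "coeff (charpoly A - (\<Prod>i\<in>UNIV. [:- A$i$i, 1:])) k = 0"
proof -
  define M where "M = (\<chi> i j. (if i = j then [:0, 1:] else 0) - [:A $ i $ j:])"
  define t where "t p = of_int (sign p) * (\<Prod>i\<in>UNIV. M$i$p i)" for p
  define P where "P = {p. p permutes (UNIV :: 'n set)}"
  have "charpoly A = t id + sum t (P - {id})"
    unfolding charpoly_def det_def M_def[symmetric] t_def[symmetric] P_def[symmetric]
    by (rule sum.remove) (auto simp: P_def permutes_id)
  moreover have "t id = (\<Prod>i\<in>UNIV. [:- A$i$i, 1:])"
    by (simp add: t_def M_def sign_id)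
  moreover have "coeff (t p) k = 0" if p: "p permutes UNIV" "p \<noteq> id" for p
  proof -
    \<comment> \<open>only the diagonal entries of the characteristic matrix have positive degree\<close>
    have "degree (t p) \<le> (\<Sum>i\<in>UNIV. degree (M$i$p i))"
      unfolding t_def of_int_poly
      using order.trans[OF degree_smult_le degree_prod_sum_le[of UNIV "\<lambda>i. M$i$p i"]]
      by (simp add: o_def)
    also have "\<dots> \<le> (\<Sum>i\<in>UNIV. if p i = i then 1 else 0)"
      by (rule sum_mono) (auto simp: M_def)
    also have "\<dots> = card {i. p i = i}"
      by (simp add: sum.If_cases)
    finally show ?thesis
      using card_fixpoints_le_permutation[OF p] k by (intro coeff_eq_0) linarith
  qed
  ultimately show ?thesis
    by (simp add: coeff_sum P_def)
qed

lemma
  fixes A :: "'a::idom^'n^'n"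
  shows degree_charpoly: "degree (charpoly A) = CARD('n)"
    and lead_coeff_charpoly: "lead_coeff (charpoly A) = 1"
    and coeff_charpoly_trace: "coeff (charpoly A) (CARD('n) - 1) = - trace A"
proof -
  obtain xs where xs: "set xs = (UNIV :: 'n set)" "distinct xs"
    using finite_distinct_list[OF finite_class.finite_UNIV] by blast
  define ds where "ds = map (\<lambda>i. A$i$i) xs"
  define d where "d = (\<Prod>e\<leftarrow>ds. [:- e, 1:])"
  have n: "length ds = CARD('n)"
    using distinct_card[OF xs(2)] by (simp add: ds_def xs(1))
  have "(\<Prod>i\<in>set xs. [:- A$i$i, 1:]) = d" "(\<Sum>i\<in>set xs. A$i$i) = sum_list ds"
    unfolding d_def ds_def prod.distinct_set_conv_list[OF xs(2)] sum.distinct_set_conv_list[OF xs(2)]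
    by (simp_all add: o_def)
  then have d: "(\<Prod>i\<in>UNIV. [:- A$i$i, 1:]) = d" and tr: "trace A = sum_list ds"
    by (simp_all add: xs(1) trace_def)
  have d_coeffs: "degree d = CARD('n)" "lead_coeff d = 1"
    unfolding d_def n[symmetric] by (rule degree_prod_linear_factors lead_coeff_prod_linear_factors)+
  have high: "coeff (charpoly A) k = coeff d k" if "CARD('n) \<le> Suc k" for k
    using coeff_charpoly_minus_diagonal[OF that, of A] unfolding d coeff_diff by simp
  have "coeff (charpoly A) k = 0" if "CARD('n) < k" for k
    using high[of k] that d_coeffs(1) by (simp add: coeff_eq_0)
  then have "degree (charpoly A) \<le> CARD('n)"
    by (simp add: degree_le)
  moreover have "coeff (charpoly A) CARD('n) = 1"
    using high[of "CARD('n)"] d_coeffs by simp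
  ultimately show "degree (charpoly A) = CARD('n)"
    by (simp add: le_antisym le_degree)
  then show "lead_coeff (charpoly A) = 1"
    using \<open>coeff (charpoly A) CARD('n) = 1\<close> by simp
  have "ds \<noteq> []"
    using n by auto
  then show "coeff (charpoly A) (CARD('n) - 1) = - trace A"
    using high[of "CARD('n) - 1"] coeff_prod_linear_factors_subleading[of ds]
    unfolding d_def[symmetric] n tr by simp
qed

lemma charpoly_eq_prod_eigenvalue_list:
  "charpoly A = (\<Prod>e\<leftarrow>eigenvalue_list A. [:- e, 1:])"
proof -
  obtain es where "charpoly A = (\<Prod>e\<leftarrow>es. [:- e, 1:])"
    using complex_monic_poly_splits[OF lead_coeff_charpoly] .
  then show ?thesis
    unfolding eigenvalue_list_def by (rule someI)
qed

lemma length_eigenvalue_list: "length (eigenvalue_list (A :: complex^'n^'n)) = CARD('n)"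
  by (metis charpoly_eq_prod_eigenvalue_list degree_charpoly degree_prod_linear_factors)

lemma sum_list_eigenvalue_list: "sum_list (eigenvalue_list A) = trace A"
proof -
  have "eigenvalue_list A \<noteq> []"
    using length_eigenvalue_list[of A] by auto
  then show ?thesis
    using coeff_charpoly_trace[of A] coeff_prod_linear_factors_subleading[of "eigenvalue_list A"]
    by (simp add: length_eigenvalue_list flip: charpoly_eq_prod_eigenvalue_list)
qed

lemma proots_charpoly: "proots (charpoly A) = mset (eigenvalue_list A)"
  by (simp add: charpoly_eq_prod_eigenvalue_list proots_prod_linear_factors)

lemma det_mat_eigenvalue_list:
  assumes "e \<in> set (eigenvalue_list A)"
  shows "det (mat e - A) = 0"
proof -
  have "charpoly A \<noteq> 0"
    using lead_coeff_charpoly[of A] by auto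
  then have "poly (charpoly A) e = 0"
    using assms set_count_proots[of "charpoly A"] by (simp add: proots_charpoly)
  then show ?thesis
    by (simp add: poly_charpoly)
qed

lemma det_subtract_rows:
  fixes M :: "'a::comm_ring_1^'n^'n"
  assumes "\<forall>i\<in>Z. \<rho> i \<notin> Z"
  shows "det (\<chi> k. if k \<in> Z then M$k - M$(\<rho> k) else M$k) = det M"
  using finite[of Z] assms
proof (induction Z rule: finite_induct)
  case empty
  then show ?case by simp
next
  case (insert z Z)
  define N where "N = (\<chi> k. if k \<in> Z then M$k - M$(\<rho> k) else M$k)"
  have "z \<noteq> \<rho> z" "\<rho> z \<notin> Z"
    using insert.prems by auto
  then have "(\<chi> k. if k \<in> insert z Z then M$k - M$(\<rho> k) else M$k)
      = (\<chi> k. if k = z then row z N + (- 1) *s row (\<rho> z) N else row k N)"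
    using insert.hyps(2) by (auto simp: vec_eq_iff N_def row_def)
  also have "det \<dots> = det N"
    by (rule det_row_operation) fact
  also have "\<dots> = det M"
    using insert.IH insert.prems by (simp add: N_def)
  finally show ?case .
qed

lemma det_dvd_of_rows_dvd:
  fixes M :: "'a::comm_ring_1^'n^'n"
  assumes "\<And>i j. i \<notin> T \<Longrightarrow> c dvd M$i$j"
  shows "c ^ (CARD('n) - card T) dvd det M"
  unfolding det_def
proof (intro dvd_sum dvd_mult)
  fix p
  have "c ^ card (- T) dvd (\<Prod>i\<in>- T. M$i$p i)"
    using prod_dvd_prod[of "- T" "\<lambda>_. c" "\<lambda>i. M$i$p i"] assms by simp
  moreover have "card (- T) = CARD('n) - card T"
    by (simp add: Compl_eq_Diff_UNIV card_Diff_subset)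
  moreover have "(\<Prod>i\<in>UNIV. M$i$p i) = (\<Prod>i\<in>- T. M$i$p i) * (\<Prod>i\<in>T. M$i$p i)"
    by (metis Compl_eq_Diff_UNIV finite prod.subset_diff subset_UNIV)
  ultimately show "c ^ (CARD('n) - card T) dvd (\<Prod>i\<in>UNIV. M$i$p i)"
    by simp
qed

lemma charpoly_X_power_dvd:
  fixes A :: "'a::comm_ring_1^'n^'n"
  shows "[:0, 1:] ^ (CARD('n) - card (range (($) A) - {0})) dvd charpoly A"
proof -
  define V where "V = range (($) A) - {0}"
  define rep where "rep v = (SOME i. A$i = v)" for v
  have A_rep: "A$(rep v) = v" if "v \<in> V" for v
    using that unfolding V_def rep_def by (auto intro: someI)
  define T where "T = rep ` V"
  have "card T = card V"
    unfolding T_def by (rule card_image) (metis A_rep inj_onI)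
  define Z where "Z = {i. i \<notin> T \<and> A$i \<noteq> 0}"
  define \<rho> where "\<rho> i = rep (A$i)" for i
  have \<rho>: "\<rho> i \<in> T" "A$(\<rho> i) = A$i" if "i \<in> Z" for i
    using that A_rep by (auto simp: Z_def T_def V_def \<rho>_def)
  define M where "M = (\<chi> i j. (if i = j then [:0, 1:] else 0) - [:A $ i $ j:])"
  define M' where "M' = (\<chi> k. if k \<in> Z then M$k - M$(\<rho> k) else M$k)"
  \<comment> \<open>subtracting from each row outside T a copy in T leaves a multiple of X in every entry\<close>
  have "[:0, 1:] dvd M'$i$j" if "i \<notin> T" for i j
  proof (cases "i \<in> Z")
    case True
    then show ?thesis
      using \<rho>[OF True] by (auto simp: M'_def M_def)
  next
    case False
    then show ?thesis
      using that by (simp add: M'_def M_def Z_def)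
  qed
  then have "[:0, 1:] ^ (CARD('n) - card T) dvd det M'"
    by (rule det_dvd_of_rows_dvd)
  moreover have "det M' = charpoly A"
    unfolding M'_def charpoly_def M_def[symmetric]
    by (rule det_subtract_rows) (use \<rho> in \<open>auto simp: Z_def\<close>)
  ultimately show ?thesis
    using \<open>card T = card V\<close> by (simp add: V_def)
qed

lemma length_nonzero_eigenvalue_list_le:
  fixes A :: "complex^'n^'n"
  shows "length (filter (\<lambda>e. e \<noteq> 0) (eigenvalue_list A)) \<le> card (range (($) A) - {0})"
proof -
  define es where "es = eigenvalue_list A"
  have "charpoly A \<noteq> 0"
    using lead_coeff_charpoly[of A] by auto
  then have "CARD('n) - card (range (($) A) - {0}) \<le> order 0 (charpoly A)"
    using charpoly_X_power_dvd[of A] order_divides[of 0] by (metis minus_zero)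
  also have "\<dots> = count (mset es) 0"
    using \<open>charpoly A \<noteq> 0\<close> by (simp add: es_def flip: proots_charpoly)
  also have "\<dots> = length (filter (\<lambda>e. e = 0) es)"
    unfolding count_mset count_list_eq_length_filter by (metis (full_types))
  finally show ?thesis
    using sum_length_filter_compl[of "\<lambda>e. e = 0" es] length_eigenvalue_list[of A]
    by (simp add: es_def)
qed

lemma reduced_density_quadratic_form:
  fixes f :: "'x::finite \<times> 'y::finite \<Rightarrow> complex"
  shows "(\<Sum>i\<in>UNIV. cnj (v$i) * (reduced_density f *v v)$i)
       = of_real (\<Sum>y\<in>UNIV. (cmod (\<Sum>j\<in>UNIV. f (j, y) * v$j))\<^sup>2)"
proof -
  define g where "g i j y = cnj (f (i, y) * v$i) * (f (j, y) * v$j)" for i j y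
  have "cnj (v$i) * (reduced_density f *v v)$i = (\<Sum>j\<in>UNIV. \<Sum>y\<in>UNIV. g i j y)" for i
    unfolding reduced_density_def matrix_vector_mult_def g_def
    by (simp add: sum_distrib_left sum_distrib_right mult_ac)
  then have "(\<Sum>i\<in>UNIV. cnj (v$i) * (reduced_density f *v v)$i)
      = (\<Sum>i\<in>UNIV. \<Sum>j\<in>UNIV. \<Sum>y\<in>UNIV. g i j y)"
    by simp
  also have "\<dots> = (\<Sum>y\<in>UNIV. \<Sum>i\<in>UNIV. \<Sum>j\<in>UNIV. g i j y)"
    by (subst sum.swap) (rule sum.cong[OF refl], rule sum.swap)
  also have "\<dots> = (\<Sum>y\<in>UNIV. cnj (\<Sum>j\<in>UNIV. f (j, y) * v$j) * (\<Sum>j\<in>UNIV. f (j, y) * v$j))"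
    unfolding g_def cnj_sum sum_product ..
  also have "\<dots> = of_real (\<Sum>y\<in>UNIV. (cmod (\<Sum>j\<in>UNIV. f (j, y) * v$j))\<^sup>2)"
    unfolding of_real_sum complex_norm_square by (simp add: mult.commute)
  finally show ?thesis .
qed

lemma reduced_density_eigenvalue_nonneg:
  fixes f :: "'x::finite \<times> 'y::finite \<Rightarrow> complex"
  assumes "det (mat e - reduced_density f) = 0"
  shows "Re e \<ge> 0"
proof -
  obtain v where "v \<noteq> 0" and "(mat e - reduced_density f) *v v = 0"
    using assms invertible_det_nz invertible_left_inverse matrix_left_invertible_ker by metis
  moreover have "mat e *v v = e *s v"
    by (simp add: vec_eq_iff matrix_vector_mult_def mat_def if_distrib[of "\<lambda>x. x * _"] cong: if_cong)
  ultimately have ev: "(reduced_density f *v v)$i = e * v$i" for i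
    by (metis matrix_vector_mult_diff_rdistrib eq_iff_diff_eq_0 vector_smult_component)
  define S where "S = (\<Sum>i\<in>UNIV. (cmod (v$i))\<^sup>2)"
  define W where "W = (\<Sum>y\<in>UNIV. (cmod (\<Sum>j\<in>UNIV. f (j, y) * v$j))\<^sup>2)"
  obtain i where "v$i \<noteq> 0"
    using \<open>v \<noteq> 0\<close> by (metis vec_eq_iff zero_index)
  then have "S > 0"
    unfolding S_def by (intro sum_pos2[of _ i]) auto
  have "of_real W = (\<Sum>i\<in>UNIV. cnj (v$i) * (e * v$i))"
    unfolding W_def reduced_density_quadratic_form[symmetric] ev ..
  also have "\<dots> = e * of_real S"
    unfolding S_def of_real_sum complex_norm_square by (simp add: sum_distrib_left mult_ac)
  finally have "Re (of_real W) = Re (e * of_real S)"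
    by (rule arg_cong)
  then have "Re e * S = W"
    by simp
  moreover have "W \<ge> 0"
    unfolding W_def by (intro sum_nonneg) auto
  ultimately show ?thesis
    using \<open>S > 0\<close> by (metis zero_le_mult_iff not_less)
qed

lemma entropy_le_ln_card_support:
  fixes xs :: "real list"
  assumes nonneg: "\<forall>x\<in>set xs. x \<ge> 0" and sum_one: "sum_list xs = 1"
  shows "- (\<Sum>x\<leftarrow>xs. x * ln x) \<le> ln (length (filter (\<lambda>x. x \<noteq> 0) xs))"
proof -
  define K where "K = real (length (filter (\<lambda>x. x \<noteq> 0) xs))"
  have K_sum: "(\<Sum>x\<leftarrow>xs. if x \<noteq> 0 then c else 0) = K * c" for c
    unfolding K_def by (induction xs) (auto simp: algebra_simps)
  have "K \<noteq> 0"
  proof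
    assume "K = 0"
    then have "\<forall>x\<in>set xs. x = 0"
      by (simp add: K_def filter_empty_conv)
    then have "sum_list xs = 0"
      by (induction xs) simp_all
    with sum_one show False
      by simp
  qed
  \<comment> \<open>Gibbs: ln y \<le> y - 1 at y = 1 / (K x)\<close>
  have pointwise: "x - (if x \<noteq> 0 then 1 / K else 0) - x * ln K \<le> x * ln x" if "x \<ge> 0" for x
  proof (cases "x = 0")
    case False
    with that \<open>K \<noteq> 0\<close> have "x > 0" "K > 0"
      by (auto simp: K_def)
    then have "x * ln (1 / (K * x)) = - (x * ln x) - x * ln K"
      by (simp add: ln_div ln_mult algebra_simps)
    moreover have "x * ln (1 / (K * x)) \<le> x * (1 / (K * x) - 1)"
      using \<open>x > 0\<close> \<open>K > 0\<close> by (intro mult_left_mono ln_le_minus_one) auto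
    moreover have "x * (1 / (K * x) - 1) = 1 / K - x"
      using \<open>x > 0\<close> \<open>K > 0\<close> by (simp add: field_simps)
    ultimately show ?thesis
      using False by simp
  qed simp
  have "(\<Sum>x\<leftarrow>xs. x - (if x \<noteq> 0 then 1 / K else 0) - x * ln K) \<le> (\<Sum>x\<leftarrow>xs. x * ln x)"
    using nonneg pointwise by (intro sum_list_mono) auto
  moreover have "(\<Sum>x\<leftarrow>xs. x - (if x \<noteq> 0 then 1 / K else 0) - x * ln K) = - ln K"
    using K_sum[of "1 / K"] sum_one \<open>K \<noteq> 0\<close> by (simp add: sum_list_subtractf sum_list_mult_const)
  ultimately show ?thesis
    by (simp add: K_def)
qed

lemma ln_of_nat_mono: "m \<le> n \<Longrightarrow> ln (real m) \<le> ln (real n)"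
  by (cases "m = 0"; cases "n = 0") auto

lemma vn_entropy_reduced_density_le:
  fixes f :: "'x::finite \<times> 'y::finite \<Rightarrow> complex"
  assumes "trace (reduced_density f) = 1"
  shows "vn_entropy (reduced_density f) \<le> ln (card (range (($) (reduced_density f)) - {0}))"
proof -
  define \<rho> where "\<rho> = reduced_density f"
  define es where "es = eigenvalue_list \<rho>"
  define xs where "xs = map Re es"
  have "\<forall>x\<in>set xs. x \<ge> 0"
    using det_mat_eigenvalue_list reduced_density_eigenvalue_nonneg by (auto simp: xs_def es_def \<rho>_def)
  moreover have "sum_list xs = 1"
  proof -
    have "sum_list (map Re zs) = Re (sum_list zs)" for zs :: "complex list"
      by (induction zs) auto
    then show ?thesis
      using assms by (simp add: xs_def es_def \<rho>_def sum_list_eigenvalue_list)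
  qed
  ultimately have "- (\<Sum>x\<leftarrow>xs. x * ln x) \<le> ln (length (filter (\<lambda>x. x \<noteq> 0) xs))"
    by (rule entropy_le_ln_card_support)
  moreover have "vn_entropy \<rho> = - (\<Sum>x\<leftarrow>xs. x * ln x)"
    by (simp add: vn_entropy_def es_def xs_def o_def)
  moreover have "length (filter (\<lambda>x. x \<noteq> 0) xs) \<le> length (filter (\<lambda>e. e \<noteq> 0) es)"
  proof -
    have "filter (\<lambda>x. x \<noteq> 0) xs = map Re (filter (\<lambda>e. Re e \<noteq> 0) (filter (\<lambda>e. e \<noteq> 0) es))"
      by (simp add: xs_def filter_map filter_filter o_def conj_commute) (metis zero_complex.simps(1))
    then show ?thesis
      by (metis length_filter_le length_map)
  qed
  moreover have "length (filter (\<lambda>e. e \<noteq> 0) es) \<le> card (range (($) \<rho>) - {0})"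
    unfolding es_def by (rule length_nonzero_eigenvalue_list_le)
  ultimately show ?thesis
    unfolding \<rho>_def[symmetric] by (metis ln_of_nat_mono order.trans)
qed

lemma card_image_le_card_image_factor:
  assumes "finite A" and "\<And>x y. x \<in> A \<Longrightarrow> y \<in> A \<Longrightarrow> g x = g y \<Longrightarrow> f x = f y"
  shows "card (f ` A) \<le> card (g ` A)"
proof -
  have "f x = f (inv_into A g (g x))" if "x \<in> A" for x
    using that by (metis assms(2) inv_into_into f_inv_into_f image_eqI)
  then have "f ` A = (\<lambda>z. f (inv_into A g z)) ` g ` A"
    by (simp add: image_image cong: image_cong)
  then show ?thesis
    using assms(1) by (metis card_image_le finite_imageI)
qed

definition normalized_indicator :: "('x \<times> 'y) set \<Rightarrow> 'x \<times> 'y \<Rightarrow> complex" where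
  "normalized_indicator S s = (if s \<in> S then 1 else 0) / complex_of_real (sqrt (real (card S)))"

lemma reduced_density_normalized_indicator:
  fixes S :: "('x::finite \<times> 'y::finite) set"
  shows "reduced_density (normalized_indicator S) $ x $ x'
       = of_nat (card {y. (x, y) \<in> S \<and> (x', y) \<in> S}) / of_nat (card S)"
proof -
  have "of_real (sqrt (card S)) * of_real (sqrt (card S)) = (of_nat (card S) :: complex)"
    by (metis of_real_mult of_real_of_nat_eq real_sqrt_mult_self abs_of_nat)
  then have "cnj (normalized_indicator S (x, y)) * normalized_indicator S (x', y)
      = (if (x, y) \<in> S \<and> (x', y) \<in> S then 1 / of_nat (card S) else 0)" for y
    by (auto simp: normalized_indicator_def field_simps)
  then show ?thesis
    by (simp add: reduced_density_def sum.If_cases)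
qed

lemma trace_reduced_density_normalized_indicator:
  fixes S :: "('x::finite \<times> 'y::finite) set"
  assumes "S \<noteq> {}"
  shows "trace (reduced_density (normalized_indicator S)) = 1"
proof -
  have "S = (SIGMA x:UNIV. {y. (x, y) \<in> S})"
    by auto
  then have "card S = (\<Sum>x\<in>UNIV. card {y. (x, y) \<in> S})"
    by (metis card_SigmaI finite)
  moreover have "card S \<noteq> 0"
    using assms by simp
  ultimately show ?thesis
    by (simp add: trace_def reduced_density_normalized_indicator flip: sum_divide_distrib of_nat_sum)
qed

lemma card_nonzero_rows_reduced_density_normalized_indicator_le:
  fixes S :: "(('a::finite \<Rightarrow> bool) \<times> 'y::finite) set" and R :: "'a set"
  assumes region: "\<And>a b a'. (\<exists>y. (a, y) \<in> S) \<Longrightarrow> (\<exists>y. (b, y) \<in> S) \<Longrightarrow> (\<exists>y. (a', y) \<in> S) \<Longrightarrow>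
      (\<forall>p\<in>R. a p = b p) \<Longrightarrow> card {y. (a, y) \<in> S \<and> (a', y) \<in> S} = card {y. (b, y) \<in> S \<and> (a', y) \<in> S}"
  shows "card (range (($) (reduced_density (normalized_indicator S))) - {0}) \<le> 2 ^ card R"
proof -
  define \<rho> where "\<rho> = reduced_density (normalized_indicator S)"
  define E where "E = {a. \<exists>y. (a, y) \<in> S}"
  have "\<rho>$a = 0" if "a \<notin> E" for a
    using that by (simp add: vec_eq_iff \<rho>_def E_def reduced_density_normalized_indicator)
  then have "range (($) \<rho>) - {0} \<subseteq> ($) \<rho> ` E"
    by auto
  then have "card (range (($) \<rho>) - {0}) \<le> card (($) \<rho> ` E)"
    by (simp add: card_mono)
  also have "\<dots> \<le> card ((\<lambda>a. {p\<in>R. a p}) ` E)"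
  proof (rule card_image_le_card_image_factor)
    fix a b
    assume "a \<in> E" "b \<in> E" "{p\<in>R. a p} = {p\<in>R. b p}"
    then have "card {y. (a, y) \<in> S \<and> (a', y) \<in> S} = card {y. (b, y) \<in> S \<and> (a', y) \<in> S}" for a'
      using region[of a b a'] by (cases "a' \<in> E") (auto simp: E_def)
    then show "\<rho>$a = \<rho>$b"
      by (simp add: vec_eq_iff \<rho>_def reduced_density_normalized_indicator)
  qed simp
  also have "\<dots> \<le> card (Pow R)"
    by (rule card_mono) auto
  finally show ?thesis
    by (simp add: \<rho>_def card_Pow)
qed

theorem theorem3:
  fixes SI :: "(('a::finite \<Rightarrow> bool) \<times> ('b::finite \<Rightarrow> bool)) set"
    and D R :: "'a set"
    and r :: real
  assumes nonempty: "SI \<noteq> {}"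
    and rD: "real (card R) = r * real (card D)"
    and bdry: "\<forall>sA sB sA' sB'. (sA, sB) \<in> SI \<longrightarrow> (sA', sB') \<in> SI \<longrightarrow> sB = sB'
                 \<longrightarrow> (\<forall>p\<in>D. sA p = sA' p)"
    and region: "\<forall>a1 a1' a2 a2'.
        (\<exists>sB. (a1, sB) \<in> SI) \<longrightarrow> (\<exists>sB. (a1', sB) \<in> SI) \<longrightarrow>
        (\<exists>sB. (a2, sB) \<in> SI) \<longrightarrow> (\<exists>sB. (a2', sB) \<in> SI) \<longrightarrow>
        (\<forall>p\<in>R. a1 p = a2 p) \<longrightarrow> (\<forall>p\<in>R. a1' p = a2' p) \<longrightarrow>
        card {sB. (a1, sB) \<in> SI \<and> (a1', sB) \<in> SI} = card {sB. (a2, sB) \<in> SI \<and> (a2', sB) \<in> SI}"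
  shows "vn_entropy (reduced_density
           (\<lambda>s. (if s \<in> SI then 1 else 0) / complex_of_real (sqrt (real (card SI)))))
         \<le> r * real (card D) * ln 2"
proof -
  define \<rho> where "\<rho> = reduced_density (normalized_indicator SI)"
  have \<rho>_eq: "reduced_density (\<lambda>s. (if s \<in> SI then 1 else 0) / complex_of_real (sqrt (real (card SI)))) = \<rho>"
    by (simp add: \<rho>_def normalized_indicator_def[abs_def])
  have rows: "card (range (($) \<rho>) - {0}) \<le> 2 ^ card R"
    unfolding \<rho>_def
  proof (rule card_nonzero_rows_reduced_density_normalized_indicator_le)
    fix a b a'
    assume "\<exists>y. (a, y) \<in> SI" "\<exists>y. (b, y) \<in> SI" "\<exists>y. (a', y) \<in> SI" "\<forall>p\<in>R. a p = b p"
    then show "card {y. (a, y) \<in> SI \<and> (a', y) \<in> SI} = card {y. (b, y) \<in> SI \<and> (a', y) \<in> SI}"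
      by - (rule region[rule_format]; auto)
  qed
  have "vn_entropy \<rho> \<le> ln (card (range (($) \<rho>) - {0}))"
    unfolding \<rho>_def
    by (intro vn_entropy_reduced_density_le trace_reduced_density_normalized_indicator nonempty)
  also have "\<dots> \<le> ln (2 ^ card R)"
    using ln_of_nat_mono[OF rows] by simp
  also have "\<dots> = r * real (card D) * ln 2"
    using rD by (simp add: ln_realpow)
  finally show ?thesis
    unfolding \<rho>_eq .
qed

end
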